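(* Let $\alpha\in(0,\infty)^T$ and $u_t(x)=\frac{1}{\alpha_t}[1-\exp(-\alpha_t x)]$, $t\in\mathbb{T}$. Then for $x\in\mathbb{R}$ and $Z\in L^\infty$: (a) $U(Z)=\frac{1}{\beta_1}\{1-E[L_1(\alpha,Z)]\}$; (b) $U(x-Z)=\frac{1}{\beta_1}\{1-\exp(-\beta_1x)E[L_1(\alpha,-Z)]\}$; (c) for any initial wealth $w\in\mathbb{R}$, the indifference price is $H(Z)=\frac{1}{\beta_1}\log E[L_1(\alpha,-Z)]$ (in particular it does not depend on $w$).
   Context: Let $T\ge 1$ be an integer and $\mathbb{T}=\{1,\dots,T\}$. Let $(\Omega,\mathcal{F},(\mathcal{F}_t)_{t\in\{0,1,\dots,T\}},P)$ be a filtered probability space and $L^{\infty}=L^{\infty}(\Omega,\mathcal{F}_T,P)$; write $E_t[Y]=E[Y\mid\mathcal{F}_t]$. Let $(r_t)_{t\in\mathbb{T}}$ be a bounded, nonnegative, predictable process, $B_0=1$, $B_t=\prod_{k=1}^t(1+r_k)$, and $\tilde X_t=X_t/B_t$. For $W\in L^\infty$, $\mathcal{A}(W)$ is the set of $(\mathcal{F}_t)$-adapted processes $(Y_t)_{t\in\mathbb{T}}$ with $Y_t\in L^\infty$ and $\sum_{t\in\mathbb{T}}\tilde Y_t=W$ a.s., and $U(W)=\sup\{\sum_{t\in\mathbb{T}}E[u_t(\tilde Y_t)]:(Y_t)\in\mathcal{A}(W)\}$. The indifference price $H(Z)$ of $Z\in L^\infty$ at initial wealth $w$ is the real number with $U(w+H(Z)-Z)=U(w)$.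 For $\alpha\in(0,\infty)^T$ define $\beta_t$ by $1/\beta_t=\sum_{k=t}^T 1/\alpha_k$. For $W\in L^\infty$ define $L_T(\alpha,W)=\exp(-\alpha_T W)$ and $L_{t-1}(\alpha,W)=E_{t-1}[L_t(\alpha,W)]^{\beta_{t-1}/\beta_t}$ for $t=2,\dots,T$. *)

theory Defs
  imports "HOL-Probability.Probability"
begin

text \<open>Essentially bounded random variables measurable w.r.t. F_T : the space L-infinity
  (random variables are functions; a.s. identification is handled by AE statements).\<close>
definition Linf :: "'a measure \<Rightarrow> 'a measure \<Rightarrow> ('a \<Rightarrow> real) \<Rightarrow> bool" where
  "Linf M FT X \<longleftrightarrow> X \<in> borel_measurable FT \<and> (\<exists>C. AE \<omega> in M. \<bar>X \<omega>\<bar> \<le> C)"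

definition bank :: "(nat \<Rightarrow> 'a \<Rightarrow> real) \<Rightarrow> nat \<Rightarrow> 'a \<Rightarrow> real" where
  "bank r t \<omega> = (\<Prod>k\<in>{1..t}. 1 + r k \<omega>)"

definition admissible ::
  "'a measure \<Rightarrow> (nat \<Rightarrow> 'a measure) \<Rightarrow> nat \<Rightarrow> (nat \<Rightarrow> 'a \<Rightarrow> real) \<Rightarrow> ('a \<Rightarrow> real)
     \<Rightarrow> (nat \<Rightarrow> 'a \<Rightarrow> real) set" where
  "admissible M F T r W =
     {Y. (\<forall>t\<in>{1..T}. Y t \<in> borel_measurable (F t) \<and> Linf M (F T) (Y t)) \<and>
         (AE \<omega> in M. (\<Sum>t\<in>{1..T}. Y t \<omega> / bank r t \<omega>) = W \<omega>)}"

definition Uval ::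
  "'a measure \<Rightarrow> (nat \<Rightarrow> 'a measure) \<Rightarrow> nat \<Rightarrow> (nat \<Rightarrow> 'a \<Rightarrow> real) \<Rightarrow> (nat \<Rightarrow> real \<Rightarrow> real)
     \<Rightarrow> ('a \<Rightarrow> real) \<Rightarrow> real" where
  "Uval M F T r u W =
     Sup {(\<Sum>t\<in>{1..T}. integral\<^sup>L M (\<lambda>\<omega>. u t (Y t \<omega> / bank r t \<omega>))) | Y. Y \<in> admissible M F T r W}"

definition exp_util :: "(nat \<Rightarrow> real) \<Rightarrow> nat \<Rightarrow> real \<Rightarrow> real" where
  "exp_util \<alpha> t x = (1 / \<alpha> t) * (1 - exp (- \<alpha> t * x))"

definition beta :: "nat \<Rightarrow> (nat \<Rightarrow> real) \<Rightarrow> nat \<Rightarrow> real" where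
  "beta T \<alpha> t = 1 / (\<Sum>k\<in>{t..T}. 1 / \<alpha> k)"

text \<open>Laux n = L_{T-n}: Laux 0 = exp(-alpha_T W),
  L_{t-1} = E_{t-1}[L_t] powr (beta_{t-1}/beta_t).\<close>
fun Laux :: "'a measure \<Rightarrow> (nat \<Rightarrow> 'a measure) \<Rightarrow> nat \<Rightarrow> (nat \<Rightarrow> real) \<Rightarrow> ('a \<Rightarrow> real)
     \<Rightarrow> nat \<Rightarrow> 'a \<Rightarrow> real" where
  "Laux M F T \<alpha> W 0 = (\<lambda>\<omega>. exp (- \<alpha> T * W \<omega>))"
| "Laux M F T \<alpha> W (Suc n) =
     (\<lambda>\<omega>. (real_cond_exp M (F (T - Suc n)) (Laux M F T \<alpha> W n) \<omega>)
            powr (beta T \<alpha> (T - Suc n) / beta T \<alpha> (T - n)))"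

definition Lfun :: "'a measure \<Rightarrow> (nat \<Rightarrow> 'a measure) \<Rightarrow> nat \<Rightarrow> (nat \<Rightarrow> real) \<Rightarrow> nat
     \<Rightarrow> ('a \<Rightarrow> real) \<Rightarrow> 'a \<Rightarrow> real" where
  "Lfun M F T \<alpha> t W = Laux M F T \<alpha> W (T - t)"

end

theory Submission
  imports Defs
begin

(*
  Write c_t = Y_t / B_t for the discounted consumption and S for the discounted wealth
  already consumed before period t.  The central quantity is the value function

      opt_value t W S = (1/beta_t) * (1 - E[L_t(W) * exp(beta_t * S)]),

  the largest achievable sum_{s=t..T} E[u_s(c_s)] over bounded adapted (c_s) with
  S + sum_{s=t..T} c_s = W.  Backward induction on t proves both that it is an upper bound
  and that it is attained.  The induction step is the one-period problem

      max_c  (1/a)(1 - exp(-a c)) + (1/b)(1 - exp(b (S + c)) G),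

  solved by the weighted AM-GM (Young) inequality with the explicit maximiser c*, applied
  pointwise with G = E_t[L_{t+1}(W)] after the tower property removes L_{t+1}.  Theorem 3.4 follows from
  U(x + W) = (1/beta_1)(1 - exp(-beta_1 x) E[L_1(W)]), which gives (a), (b), and (c) by
  solving the indifference equation, using E[L_1(0)] = 1.
*)

section \<open>Bounded random variables\<close>

definition Linf_pos :: "'a measure \<Rightarrow> 'a measure \<Rightarrow> ('a \<Rightarrow> real) \<Rightarrow> bool" where
  "Linf_pos M N X \<longleftrightarrow> Linf M N X \<and> (\<exists>a>0. AE \<omega> in M. a \<le> X \<omega>)"

lemma Linf_const [simp]: "Linf M N (\<lambda>_. c)"
  unfolding Linf_def by auto

lemma Linf_add:
  assumes "Linf M N X" "Linf M N Y"
  shows "Linf M N (\<lambda>\<omega>. X \<omega> + Y \<omega>)"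
proof -
  obtain C D where "X \<in> borel_measurable N" "Y \<in> borel_measurable N"
    and C: "AE \<omega> in M. \<bar>X \<omega>\<bar> \<le> C" and D: "AE \<omega> in M. \<bar>Y \<omega>\<bar> \<le> D"
    using assms unfolding Linf_def by blast
  moreover from C D have "AE \<omega> in M. \<bar>X \<omega> + Y \<omega>\<bar> \<le> C + D"
    by eventually_elim linarith
  ultimately show ?thesis
    unfolding Linf_def by auto
qed

lemma Linf_mult:
  assumes "Linf M N X" "Linf M N Y"
  shows "Linf M N (\<lambda>\<omega>. X \<omega> * Y \<omega>)"
proof -
  obtain C D where "X \<in> borel_measurable N" "Y \<in> borel_measurable N"
    and C: "AE \<omega> in M. \<bar>X \<omega>\<bar> \<le> C" and D: "AE \<omega> in M. \<bar>Y \<omega>\<bar> \<le> D"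
    using assms unfolding Linf_def by blast
  moreover from C D have "AE \<omega> in M. \<bar>X \<omega> * Y \<omega>\<bar> \<le> C * D"
    by eventually_elim (simp add: abs_mult mult_mono')
  ultimately show ?thesis
    unfolding Linf_def by auto
qed

lemma Linf_cmult: "Linf M N X \<Longrightarrow> Linf M N (\<lambda>\<omega>. k * X \<omega>)"
  using Linf_mult[OF Linf_const] .

lemma Linf_diff: "Linf M N X \<Longrightarrow> Linf M N Y \<Longrightarrow> Linf M N (\<lambda>\<omega>. X \<omega> - Y \<omega>)"
  using Linf_add[of M N X "\<lambda>\<omega>. (- 1) * Y \<omega>"] Linf_cmult[of M N Y "- 1"] by simp

lemma Linf_exp_pos:
  assumes "Linf M N X"
  shows "Linf_pos M N (\<lambda>\<omega>. exp (X \<omega>))"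
proof -
  obtain C where m: "X \<in> borel_measurable N" and C: "AE \<omega> in M. \<bar>X \<omega>\<bar> \<le> C"
    using assms unfolding Linf_def by blast
  from C have "AE \<omega> in M. exp (- C) \<le> exp (X \<omega>) \<and> \<bar>exp (X \<omega>)\<bar> \<le> exp C"
    by eventually_elim (simp add: abs_le_iff)
  then show ?thesis
    using m unfolding Linf_pos_def Linf_def
    by (intro conjI exI[of _ "exp (- C)"] exI[of _ "exp C"]) (auto elim: eventually_mono)
qed

lemma Linf_exp: "Linf M N X \<Longrightarrow> Linf M N (\<lambda>\<omega>. exp (X \<omega>))"
  using Linf_exp_pos unfolding Linf_pos_def by blast

lemma Linf_exp_util: "Linf M N X \<Longrightarrow> Linf M N (\<lambda>\<omega>. exp_util \<alpha> s (X \<omega>))"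
  unfolding exp_util_def by (intro Linf_cmult Linf_diff Linf_const Linf_exp)

lemma Linf_powr_pos:
  assumes "Linf_pos M N X" and "0 \<le> q"
  shows "Linf_pos M N (\<lambda>\<omega>. X \<omega> powr q)"
proof -
  obtain a C where m: "X \<in> borel_measurable N" and a: "0 < a" "AE \<omega> in M. a \<le> X \<omega>"
    and C: "AE \<omega> in M. \<bar>X \<omega>\<bar> \<le> C"
    using assms(1) unfolding Linf_pos_def Linf_def by blast
  from a(2) C have "AE \<omega> in M. a powr q \<le> X \<omega> powr q \<and> \<bar>X \<omega> powr q\<bar> \<le> C powr q"
    by eventually_elim (use a(1) assms(2) in \<open>auto intro!: powr_mono2\<close>)
  then show ?thesis
    using m a(1) unfolding Linf_pos_def Linf_def
    by (intro conjI exI[of _ "a powr q"] exI[of _ "C powr q"]) (auto elim: eventually_mono)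
qed

lemma Linf_ln:
  assumes "Linf_pos M N X"
  shows "Linf M N (\<lambda>\<omega>. ln (X \<omega>))"
proof -
  obtain a C where m: "X \<in> borel_measurable N" and a: "0 < a" "AE \<omega> in M. a \<le> X \<omega>"
    and C: "AE \<omega> in M. \<bar>X \<omega>\<bar> \<le> C"
    using assms unfolding Linf_pos_def Linf_def by blast
  from a(2) C have "AE \<omega> in M. \<bar>ln (X \<omega>)\<bar> \<le> \<bar>ln a\<bar> + \<bar>ln C\<bar>"
  proof eventually_elim
    case (elim \<omega>)
    then have "ln a \<le> ln (X \<omega>)" "ln (X \<omega>) \<le> ln C"
      using a(1) by auto
    then show ?case by arith
  qed
  then show ?thesis
    using m unfolding Linf_def by auto
qed

lemma Linf_integrable:
  assumes "prob_space M" "subalgebra M N" "Linf M N X"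
  shows "integrable M X"
proof -
  interpret prob_space M by fact
  obtain C where "X \<in> borel_measurable N" "AE \<omega> in M. \<bar>X \<omega>\<bar> \<le> C"
    using assms(3) unfolding Linf_def by blast
  then show ?thesis
    using measurable_from_subalg[OF assms(2)] by (intro integrable_const_bound[where B = C]) auto
qed

lemma (in sigma_finite_subalgebra) Linf_pos_cond_exp:
  assumes "integrable M X" "Linf_pos M N X"
  shows "Linf_pos M F (real_cond_exp M F X)"
proof -
  obtain a C where a: "0 < a" "AE \<omega> in M. a \<le> X \<omega>" and C: "AE \<omega> in M. \<bar>X \<omega>\<bar> \<le> C"
    using assms(2) unfolding Linf_pos_def Linf_def by blast
  have ge: "AE \<omega> in M. a \<le> real_cond_exp M F X \<omega>"
    by (rule real_cond_exp_ge_c[OF assms(1) a(2)])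
  have "AE \<omega> in M. real_cond_exp M F X \<omega> \<le> C"
    by (rule real_cond_exp_le_c[OF assms(1)]) (use C in \<open>auto elim: eventually_mono\<close>)
  with ge have "AE \<omega> in M. \<bar>real_cond_exp M F X \<omega>\<bar> \<le> C"
    by eventually_elim (use a(1) in auto)
  then show ?thesis
    using ge a(1) unfolding Linf_pos_def Linf_def by auto
qed

lemma (in prob_space) integral_pos_Linf_pos:
  assumes "integrable M X" "Linf_pos M N X"
  shows "0 < integral\<^sup>L M X"
proof -
  obtain a where a: "0 < a" "AE \<omega> in M. a \<le> X \<omega>"
    using assms(2) unfolding Linf_pos_def by blast
  have "a = (\<integral>\<omega>. a \<partial>M)"
    by (simp add: prob_space)
  also have "\<dots> \<le> integral\<^sup>L M X"
    using a(2) assms(1) by (intro integral_mono_AE) auto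
  finally show ?thesis
    using a(1) by simp
qed

lemma (in prob_space) integral_affine:
  fixes g :: "'a \<Rightarrow> real"
  assumes "integrable M g"
  shows "(\<integral>\<omega>. k * (1 - g \<omega>) \<partial>M) = k * (1 - integral\<^sup>L M g)"
proof -
  have "(\<integral>\<omega>. k * (1 - g \<omega>) \<partial>M) = k * (\<integral>\<omega>. 1 - g \<omega> \<partial>M)"
    by (rule Bochner_Integration.integral_mult_right_zero)
  also have "(\<integral>\<omega>. 1 - g \<omega> \<partial>M) = 1 - integral\<^sup>L M g"
    using assms by (simp add: Bochner_Integration.integral_diff prob_space)
  finally show ?thesis .
qed

lemma (in prob_space) integral_add_affine:
  fixes f g :: "'a \<Rightarrow> real"
  assumes "integrable M f" "integrable M g"
  shows "(\<integral>\<omega>. f \<omega> + k * (1 - g \<omega>) \<partial>M) = integral\<^sup>L M f + k * (1 - integral\<^sup>L M g)"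
proof -
  have "(\<integral>\<omega>. f \<omega> + k * (1 - g \<omega>) \<partial>M) = integral\<^sup>L M f + (\<integral>\<omega>. k * (1 - g \<omega>) \<partial>M)"
    using assms
    by (intro Bochner_Integration.integral_add Bochner_Integration.integrable_mult_right
        Bochner_Integration.integrable_diff integrable_const)
  then show ?thesis
    using integral_affine[OF assms(2)] by simp
qed

section \<open>The one-period problem\<close>

text \<open>This is weighted AM-GM.\<close>
lemma one_period_bound:
  fixes a b bb G S c :: real
  assumes a: "0 < a" and b: "0 < b" and bb: "1 / bb = 1 / a + 1 / b" and G: "0 < G"
  shows "(1 / a) * (1 - exp (- a * c)) + (1 / b) * (1 - exp (b * (S + c)) * G)
         \<le> (1 / bb) * (1 - G powr (bb / b) * exp (bb * S))"
proof -
  have bb_pos: "0 < bb"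
    using bb a b by (metis add_pos_pos divide_pos_pos zero_less_divide_1_iff)
  define p q where "p = bb / a" and "q = bb / b"
  have pq: "p + q = 1"
    unfolding p_def q_def using bb bb_pos by (simp add: field_simps)
  define X Y where "X = exp (- a * c)" and "Y = exp (b * (S + c)) * G"
  have "X powr p * Y powr q \<le> p * X + q * Y"
    using a b bb_pos G pq unfolding p_def q_def X_def Y_def
    by (intro Youngs_inequality_0) auto
  moreover have "X powr p * Y powr q = G powr q * exp (bb * S)"
    using a b G
    by (simp add: X_def Y_def p_def q_def powr_def ln_mult field_simps flip: exp_add)
  ultimately have AM_GM: "G powr q * exp (bb * S) \<le> p * X + q * Y"
    by simp
  have "(1 / a) * (1 - X) + (1 / b) * (1 - Y) = (1 / a + 1 / b) - ((1 / a) * X + (1 / b) * Y)"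
    by (simp add: right_diff_distrib)
  also have "(1 / a) * X + (1 / b) * Y = (1 / bb) * (p * X + q * Y)"
    unfolding p_def q_def using bb_pos by (simp add: algebra_simps)
  also have "(1 / a + 1 / b) - (1 / bb) * (p * X + q * Y) \<le> (1 / bb) - (1 / bb) * (G powr q * exp (bb * S))"
  proof -
    have "(1 / bb) * (G powr q * exp (bb * S)) \<le> (1 / bb) * (p * X + q * Y)"
      using AM_GM bb_pos by (intro mult_left_mono) auto
    then show ?thesis
      using bb by linarith
  qed
  finally show ?thesis
    unfolding X_def Y_def q_def by (simp add: right_diff_distrib)
qed

text \<open>Equality holds at the explicit maximiser, where all three exponentials coincide.\<close>
lemma one_period_optimum:
  fixes a b bb G S :: real
  assumes a: "0 < a" and b: "0 < b" and bb: "1 / bb = 1 / a + 1 / b" and G: "0 < G"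
  defines "c \<equiv> - (ln G + b * S) / (a + b)"
  shows "(1 / a) * (1 - exp (- a * c)) + (1 / b) * (1 - exp (b * (S + c)) * G)
         = (1 / bb) * (1 - G powr (bb / b) * exp (bb * S))"
proof -
  have "bb = 1 / (1 / bb)"
    by simp
  also have "\<dots> = a * b / (a + b)"
    unfolding bb using a b by (simp add: field_simps)
  finally have bb_eq: "bb = a * b / (a + b)" .
  define E where "E = exp (a * (ln G + b * S) / (a + b))"
  have e1: "exp (- a * c) = E"
    unfolding E_def c_def using a b by (simp add: field_simps)
  have "exp (b * (S + c)) * G = exp (b * (S + c) + ln G)"
    using G by (simp add: exp_add)
  also have "b * (S + c) + ln G = a * (ln G + b * S) / (a + b)"
    unfolding c_def using a b by (simp add: field_simps)
  finally have e2: "exp (b * (S + c)) * G = E"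
    unfolding E_def .
  have e3: "G powr (bb / b) * exp (bb * S) = E"
  proof -
    have "bb / b = a / (a + b)"
      unfolding bb_eq using b by simp
    then have "G powr (bb / b) * exp (bb * S) = exp (a / (a + b) * ln G + bb * S)"
      using G by (simp add: powr_def exp_add)
    also have "a / (a + b) * ln G + bb * S = a * (ln G + b * S) / (a + b)"
      unfolding bb_eq by (simp add: distrib_left add_divide_distrib mult.assoc)
    finally show ?thesis
      unfolding E_def .
  qed
  show ?thesis
    unfolding e1 e2 e3 bb by (simp add: distrib_right)
qed

section \<open>The value function of the exponential utility problem\<close>

locale exp_utility_model = prob_space M for M :: "'a measure" +
  fixes F :: "nat \<Rightarrow> 'a measure" and T :: nat and \<alpha> :: "nat \<Rightarrow> real"
  assumes T_ge_1: "1 \<le> T"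
    and filtration_sub: "\<And>t. t \<le> T \<Longrightarrow> subalgebra M (F t)"
    and filtration_mono: "\<And>s t. s \<le> t \<Longrightarrow> t \<le> T \<Longrightarrow> sets (F s) \<subseteq> sets (F t)"
    and \<alpha>_pos: "\<And>t. 1 \<le> t \<Longrightarrow> t \<le> T \<Longrightarrow> 0 < \<alpha> t"
begin

abbreviation \<beta> :: "nat \<Rightarrow> real" where "\<beta> t \<equiv> beta T \<alpha> t"
abbreviation L :: "nat \<Rightarrow> ('a \<Rightarrow> real) \<Rightarrow> 'a \<Rightarrow> real" where "L t W \<equiv> Lfun M F T \<alpha> t W"
abbreviation u :: "nat \<Rightarrow> real \<Rightarrow> real" where "u \<equiv> exp_util \<alpha>"

lemma sigma_finite_F: "t \<le> T \<Longrightarrow> sigma_finite_subalgebra M (F t)"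
  using filtration_sub
  by (intro finite_measure_subalgebra_is_sigma_finite)
    (simp add: finite_measure_subalgebra_def finite_measure_subalgebra_axioms_def finite_measure_axioms)

lemma measurable_F_mono:
  "s \<le> t \<Longrightarrow> t \<le> T \<Longrightarrow> X \<in> borel_measurable (F s) \<Longrightarrow> X \<in> borel_measurable (F t)"
  using measurable_mono[of borel borel "F s" "F t"] filtration_mono filtration_sub[of s] filtration_sub[of t]
  by (auto simp: subalgebra_def)

lemma Linf_F_mono: "s \<le> t \<Longrightarrow> t \<le> T \<Longrightarrow> Linf M (F s) X \<Longrightarrow> Linf M (F t) X"
  unfolding Linf_def using measurable_F_mono by blast

lemma Linf_F_integrable: "t \<le> T \<Longrightarrow> Linf M (F t) X \<Longrightarrow> integrable M X"
  using Linf_integrable[OF prob_space_axioms filtration_sub] by blast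

lemma Linf_F_measurable: "t \<le> T \<Longrightarrow> Linf M (F t) X \<Longrightarrow> X \<in> borel_measurable M"
  unfolding Linf_def using measurable_from_subalg filtration_sub by blast

lemma beta_pos: "1 \<le> t \<Longrightarrow> t \<le> T \<Longrightarrow> 0 < \<beta> t"
  unfolding beta_def using \<alpha>_pos by (intro divide_pos_pos sum_pos) auto

lemma beta_T: "\<beta> T = \<alpha> T"
  unfolding beta_def by simp

lemma beta_step: "t < T \<Longrightarrow> 1 / \<beta> t = 1 / \<alpha> t + 1 / \<beta> (Suc t)"
  unfolding beta_def by (simp add: sum.atLeast_Suc_atMost)

definition Lcond :: "nat \<Rightarrow> ('a \<Rightarrow> real) \<Rightarrow> 'a \<Rightarrow> real" where
  "Lcond t W = real_cond_exp M (F t) (L (Suc t) W)"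

lemma L_T: "L T W = (\<lambda>\<omega>. exp (- \<alpha> T * W \<omega>))"
  unfolding Lfun_def by simp

lemma L_step: "t < T \<Longrightarrow> L t W = (\<lambda>\<omega>. Lcond t W \<omega> powr (\<beta> t / \<beta> (Suc t)))"
proof -
  assume "t < T"
  then have "T - t = Suc (T - Suc t)" "T - Suc (T - Suc t) = t" "T - (T - Suc t) = Suc t"
    by auto
  then show ?thesis
    unfolding Lfun_def Lcond_def by simp
qed

lemma Lcond_Linf_pos_of_L:
  assumes "t < T" and "Linf_pos M (F (Suc t)) (L (Suc t) W)"
  shows "Linf_pos M (F t) (Lcond t W)"
proof -
  interpret sigma_finite_subalgebra M "F t"
    using sigma_finite_F assms(1) by simp
  have "integrable M (L (Suc t) W)"
    using assms Linf_F_integrable[of "Suc t"] unfolding Linf_pos_def by auto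
  then show ?thesis
    unfolding Lcond_def using assms(2) by (rule Linf_pos_cond_exp)
qed

lemma L_Linf_pos:
  assumes W: "Linf M (F T) W" and t: "1 \<le> t" "t \<le> T"
  shows "Linf_pos M (F t) (L t W)"
  using t(2)
proof (induction t rule: inc_induct)
  case base
  show ?case
    unfolding L_T using W by (intro Linf_exp_pos Linf_cmult)
next
  case (step n)
  then have "Linf_pos M (F n) (Lcond n W)"
    by (intro Lcond_Linf_pos_of_L) auto
  then show ?case
    unfolding L_step[OF \<open>n < T\<close>] using step t beta_pos
    by (intro Linf_powr_pos) (auto intro!: divide_nonneg_pos less_imp_le)
qed

lemma Lcond_Linf_pos: "Linf M (F T) W \<Longrightarrow> t < T \<Longrightarrow> Linf_pos M (F t) (Lcond t W)"
  by (intro Lcond_Linf_pos_of_L L_Linf_pos) auto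

lemma Lcond_pos_AE: "Linf M (F T) W \<Longrightarrow> t < T \<Longrightarrow> AE \<omega> in M. 0 < Lcond t W \<omega>"
  using Lcond_Linf_pos unfolding Linf_pos_def by (fastforce elim: eventually_mono)

lemma L_Linf: "Linf M (F T) W \<Longrightarrow> 1 \<le> t \<Longrightarrow> t \<le> T \<Longrightarrow> Linf M (F t) (L t W)"
  using L_Linf_pos unfolding Linf_pos_def by blast

lemma L_exp_integrable:
  "Linf M (F T) W \<Longrightarrow> 1 \<le> t \<Longrightarrow> t \<le> T \<Longrightarrow> Linf M (F t) S
     \<Longrightarrow> integrable M (\<lambda>\<omega>. L t W \<omega> * exp (b * S \<omega>))"
  by (intro Linf_F_integrable[of t] Linf_mult L_Linf Linf_exp Linf_cmult)

lemma L_zero: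
  assumes "t \<le> T"
  shows "AE \<omega> in M. L t (\<lambda>_. 0) \<omega> = 1"
  using assms
proof (induction t rule: inc_induct)
  case base
  show ?case
    unfolding L_T by simp
next
  case (step n)
  interpret sigma_finite_subalgebra M "F n"
    using sigma_finite_F step by simp
  have "L (Suc n) (\<lambda>_. 0) \<in> borel_measurable M"
    using step by (intro Linf_F_measurable[of "Suc n"] L_Linf) auto
  then have "AE \<omega> in M. Lcond n (\<lambda>_. 0) \<omega> = real_cond_exp M (F n) (\<lambda>_. 1) \<omega>"
    unfolding Lcond_def by (intro real_cond_exp_cong step.IH) auto
  moreover have "AE \<omega> in M. real_cond_exp M (F n) (\<lambda>_. 1) \<omega> = 1"
    by (intro real_cond_exp_F_meas) auto
  ultimately show ?case
    unfolding L_step[OF \<open>n < T\<close>] by eventually_elim simp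
qed

lemma integral_L_zero: "integral\<^sup>L M (L 1 (\<lambda>_. 0)) = 1"
proof -
  have "integral\<^sup>L M (L 1 (\<lambda>_. 0)) = (\<integral>\<omega>. 1 \<partial>M)"
    using L_zero[of 1] T_ge_1 Linf_F_measurable L_Linf[of "\<lambda>_. 0" 1]
    by (intro integral_cong_AE) auto
  then show ?thesis
    by (simp add: prob_space)
qed

lemma integral_L_pos: "Linf M (F T) W \<Longrightarrow> 0 < integral\<^sup>L M (L 1 W)"
  using T_ge_1 L_Linf_pos[of W 1] Linf_F_integrable[of 1]
  by (intro integral_pos_Linf_pos[of _ "F 1"]) (auto simp: Linf_pos_def)

subsection \<open>Dynamic programming\<close>

text \<open>The optimal expected utility of periods t, ..., T when the discounted amount S has
  already been consumed and discounted consumption must add up to W in total.\<close>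
definition opt_value :: "nat \<Rightarrow> ('a \<Rightarrow> real) \<Rightarrow> ('a \<Rightarrow> real) \<Rightarrow> real" where
  "opt_value t W S = (1 / \<beta> t) * (1 - (\<integral>\<omega>. L t W \<omega> * exp (\<beta> t * S \<omega>) \<partial>M))"

lemma opt_value_as_integral:
  assumes "Linf M (F T) W" "1 \<le> t" "t \<le> T" "Linf M (F t) S"
  shows "opt_value t W S = (\<integral>\<omega>. (1 / \<beta> t) * (1 - L t W \<omega> * exp (\<beta> t * S \<omega>)) \<partial>M)"
    and "integrable M (\<lambda>\<omega>. (1 / \<beta> t) * (1 - L t W \<omega> * exp (\<beta> t * S \<omega>)))"
proof -
  have "integrable M (\<lambda>\<omega>. L t W \<omega> * exp (\<beta> t * S \<omega>))"
    using assms by (rule L_exp_integrable)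
  then show "opt_value t W S = (\<integral>\<omega>. (1 / \<beta> t) * (1 - L t W \<omega> * exp (\<beta> t * S \<omega>)) \<partial>M)"
    and "integrable M (\<lambda>\<omega>. (1 / \<beta> t) * (1 - L t W \<omega> * exp (\<beta> t * S \<omega>)))"
    unfolding opt_value_def by (simp_all add: integral_affine prob_space)
qed

lemma opt_value_terminal:
  assumes W: "Linf M (F T) W" and S: "Linf M (F T) S" and c: "Linf M (F T) c"
    and budget: "AE \<omega> in M. S \<omega> + c \<omega> = W \<omega>"
  shows "(\<integral>\<omega>. u T (c \<omega>) \<partial>M) = opt_value T W S"
proof -
  have "AE \<omega> in M. u T (c \<omega>) = (1 / \<beta> T) * (1 - L T W \<omega> * exp (\<beta> T * S \<omega>))"
    using budget
  proof eventually_elim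
    case (elim \<omega>)
    then have W_eq: "W \<omega> = S \<omega> + c \<omega>"
      by simp
    have "exp (- \<alpha> T * (S \<omega> + c \<omega>)) * exp (\<alpha> T * S \<omega>) = exp (- \<alpha> T * c \<omega>)"
      by (simp add: algebra_simps flip: exp_add)
    then show ?case
      unfolding exp_util_def L_T beta_T W_eq by simp
  qed
  moreover have "integrable M (\<lambda>\<omega>. u T (c \<omega>))"
    using c by (intro Linf_F_integrable[of T] Linf_exp_util) auto
  moreover note value_int = opt_value_as_integral[OF W T_ge_1 order.refl S]
  ultimately show ?thesis
    unfolding value_int(1) by (intro integral_cong_AE borel_measurable_integrable)
qed

text \<open>Tower property: against an F_n-measurable bounded weight, L_{n+1}(W) may be replaced by
  its conditional expectation E_n[L_{n+1}(W)].\<close>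
lemma integral_L_Lcond:
  assumes W: "Linf M (F T) W" and n: "n < T" and S: "Linf M (F n) S"
  shows "(\<integral>\<omega>. L (Suc n) W \<omega> * exp (b * S \<omega>) \<partial>M) = (\<integral>\<omega>. exp (b * S \<omega>) * Lcond n W \<omega> \<partial>M)"
    and "integrable M (\<lambda>\<omega>. exp (b * S \<omega>) * Lcond n W \<omega>)"
proof -
  interpret sigma_finite_subalgebra M "F n"
    using sigma_finite_F n by simp
  have "S \<in> borel_measurable (F n)"
    using S unfolding Linf_def by blast
  then have weight: "(\<lambda>\<omega>. exp (b * S \<omega>)) \<in> borel_measurable (F n)"
    by measurable
  have L_meas: "L (Suc n) W \<in> borel_measurable M"
    using W n by (intro Linf_F_measurable[of "Suc n"] L_Linf) auto
  have "integrable M (\<lambda>\<omega>. L (Suc n) W \<omega> * exp (b * S \<omega>))"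
    using W n Linf_F_mono[OF _ _ S, of "Suc n"] by (intro L_exp_integrable) auto
  then have int: "integrable M (\<lambda>\<omega>. exp (b * S \<omega>) * L (Suc n) W \<omega>)"
    by (simp add: mult.commute)
  show "integrable M (\<lambda>\<omega>. exp (b * S \<omega>) * Lcond n W \<omega>)"
    unfolding Lcond_def by (rule real_cond_exp_intg(1)[OF int weight L_meas])
  show "(\<integral>\<omega>. L (Suc n) W \<omega> * exp (b * S \<omega>) \<partial>M) = (\<integral>\<omega>. exp (b * S \<omega>) * Lcond n W \<omega> \<partial>M)"
    unfolding Lcond_def using real_cond_exp_intg(2)[OF int weight L_meas] by (simp add: mult.commute)
qed

lemma bellman_reduction:
  assumes W: "Linf M (F T) W" and n: "n < T" and S: "Linf M (F n) S" and c: "Linf M (F n) c"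
  shows "(\<integral>\<omega>. u n (c \<omega>) \<partial>M) + opt_value (Suc n) W (\<lambda>\<omega>. S \<omega> + c \<omega>)
       = (\<integral>\<omega>. u n (c \<omega>) + (1 / \<beta> (Suc n)) * (1 - exp (\<beta> (Suc n) * (S \<omega> + c \<omega>)) * Lcond n W \<omega>) \<partial>M)"
    and "integrable M
       (\<lambda>\<omega>. u n (c \<omega>) + (1 / \<beta> (Suc n)) * (1 - exp (\<beta> (Suc n) * (S \<omega> + c \<omega>)) * Lcond n W \<omega>))"
proof -
  have u_int: "integrable M (\<lambda>\<omega>. u n (c \<omega>))"
    using n c by (intro Linf_F_integrable[of n] Linf_exp_util) auto
  note tower = integral_L_Lcond[OF W n Linf_add[OF S c], of "\<beta> (Suc n)"]
  show "integrable M
       (\<lambda>\<omega>. u n (c \<omega>) + (1 / \<beta> (Suc n)) * (1 - exp (\<beta> (Suc n) * (S \<omega> + c \<omega>)) * Lcond n W \<omega>))"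
    using u_int tower(2)
    by (intro Bochner_Integration.integrable_add Bochner_Integration.integrable_mult_right
        Bochner_Integration.integrable_diff integrable_const)
  show "(\<integral>\<omega>. u n (c \<omega>) \<partial>M) + opt_value (Suc n) W (\<lambda>\<omega>. S \<omega> + c \<omega>)
       = (\<integral>\<omega>. u n (c \<omega>) + (1 / \<beta> (Suc n)) * (1 - exp (\<beta> (Suc n) * (S \<omega> + c \<omega>)) * Lcond n W \<omega>) \<partial>M)"
    unfolding opt_value_def tower(1) integral_add_affine[OF u_int tower(2)] ..
qed

lemma bellman_inequality:
  assumes W: "Linf M (F T) W" and n: "1 \<le> n" "n < T" and S: "Linf M (F n) S" and c: "Linf M (F n) c"
  shows "(\<integral>\<omega>. u n (c \<omega>) \<partial>M) + opt_value (Suc n) W (\<lambda>\<omega>. S \<omega> + c \<omega>) \<le> opt_value n W S"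
proof -
  have a_n: "0 < \<alpha> n" and b_n: "0 < \<beta> (Suc n)" and rec: "1 / \<beta> n = 1 / \<alpha> n + 1 / \<beta> (Suc n)"
    using n by (auto intro: \<alpha>_pos beta_pos beta_step)
  have pointwise: "AE \<omega> in M. u n (c \<omega>) + (1 / \<beta> (Suc n)) * (1 - exp (\<beta> (Suc n) * (S \<omega> + c \<omega>)) * Lcond n W \<omega>)
      \<le> (1 / \<beta> n) * (1 - L n W \<omega> * exp (\<beta> n * S \<omega>))"
    using Lcond_pos_AE[OF W n(2)]
  proof eventually_elim
    case (elim \<omega>)
    from one_period_bound[OF a_n b_n rec elim, where S = "S \<omega>" and c = "c \<omega>"]
    show ?case
      unfolding exp_util_def L_step[OF n(2)] by simp
  qed
  have n_le: "n \<le> T"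
    using n by simp
  note reduction = bellman_reduction[OF W n(2) S c]
  note value_int = opt_value_as_integral[OF W n(1) n_le S]
  show ?thesis
    unfolding reduction(1) value_int(1) by (rule integral_mono_AE[OF reduction(2) value_int(2) pointwise])
qed

text \<open>The optimal consumption in period n, maximising the one-period objective pointwise.\<close>
definition opt_control :: "nat \<Rightarrow> ('a \<Rightarrow> real) \<Rightarrow> ('a \<Rightarrow> real) \<Rightarrow> 'a \<Rightarrow> real" where
  "opt_control n W S \<omega> = - (ln (Lcond n W \<omega>) + \<beta> (Suc n) * S \<omega>) / (\<alpha> n + \<beta> (Suc n))"

lemma opt_control_Linf:
  assumes W: "Linf M (F T) W" and n: "n < T" and S: "Linf M (F n) S"
  shows "Linf M (F n) (opt_control n W S)"
proof -
  have affine: "opt_control n W S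
      = (\<lambda>\<omega>. (- 1 / (\<alpha> n + \<beta> (Suc n))) * (ln (Lcond n W \<omega>) + \<beta> (Suc n) * S \<omega>))"
    by (simp add: opt_control_def fun_eq_iff diff_divide_distrib add_divide_distrib)
  show ?thesis
    unfolding affine using Lcond_Linf_pos[OF W n] S by (intro Linf_cmult Linf_add Linf_ln)
qed

lemma bellman_equality:
  assumes W: "Linf M (F T) W" and n: "1 \<le> n" "n < T" and S: "Linf M (F n) S"
  defines "c \<equiv> opt_control n W S"
  shows "(\<integral>\<omega>. u n (c \<omega>) \<partial>M) + opt_value (Suc n) W (\<lambda>\<omega>. S \<omega> + c \<omega>) = opt_value n W S"
proof -
  have c: "Linf M (F n) c"
    unfolding c_def using W n S by (intro opt_control_Linf) auto
  have a_n: "0 < \<alpha> n" and b_n: "0 < \<beta> (Suc n)" and rec: "1 / \<beta> n = 1 / \<alpha> n + 1 / \<beta> (Suc n)"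
    using n by (auto intro: \<alpha>_pos beta_pos beta_step)
  have pointwise: "AE \<omega> in M. u n (c \<omega>) + (1 / \<beta> (Suc n)) * (1 - exp (\<beta> (Suc n) * (S \<omega> + c \<omega>)) * Lcond n W \<omega>)
      = (1 / \<beta> n) * (1 - L n W \<omega> * exp (\<beta> n * S \<omega>))"
    using Lcond_pos_AE[OF W n(2)]
  proof eventually_elim
    case (elim \<omega>)
    from one_period_optimum[OF a_n b_n rec elim, where S = "S \<omega>"]
    show ?case
      unfolding exp_util_def L_step[OF n(2)] c_def opt_control_def by simp
  qed
  have n_le: "n \<le> T"
    using n by simp
  note reduction = bellman_reduction[OF W n(2) S c]
  note value_int = opt_value_as_integral[OF W n(1) n_le S]
  show ?thesis
    unfolding reduction(1) value_int(1)
    by (rule integral_cong_AE[OF borel_measurable_integrable[OF reduction(2)]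
          borel_measurable_integrable[OF value_int(2)] pointwise])
qed

lemma sum_split_first:
  fixes f :: "nat \<Rightarrow> 'b::comm_monoid_add"
  shows "n < T \<Longrightarrow> (\<Sum>s\<in>{n..T}. f s) = f n + (\<Sum>s\<in>{Suc n..T}. f s)"
  by (intro sum.atLeast_Suc_atMost) simp

lemma opt_value_upper:
  assumes W: "Linf M (F T) W" and t: "1 \<le> t" "t \<le> T"
    and S: "Linf M (F (t - 1)) S" and c: "\<And>s. s \<in> {t..T} \<Longrightarrow> Linf M (F s) (c s)"
    and budget: "AE \<omega> in M. S \<omega> + (\<Sum>s\<in>{t..T}. c s \<omega>) = W \<omega>"
  shows "(\<Sum>s\<in>{t..T}. \<integral>\<omega>. u s (c s \<omega>) \<partial>M) \<le> opt_value t W S"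
  using t(2) S budget
proof (induction t arbitrary: S rule: inc_induct)
  case base
  have S_T: "Linf M (F T) S"
    using base.prems(1) by (rule Linf_F_mono[rotated 2]) auto
  have c_T: "Linf M (F T) (c T)"
    using c t by simp
  show ?case
    using opt_value_terminal[OF W S_T c_T] base.prems(2) by simp
next
  case (step n)
  have n: "1 \<le> n" "n < T"
    using step t by auto
  have S_n: "Linf M (F n) S"
    using step.prems(1) n by (intro Linf_F_mono[of "n - 1" n]) auto
  have c_n: "Linf M (F n) (c n)"
    using c step by auto
  have "AE \<omega> in M. (S \<omega> + c n \<omega>) + (\<Sum>s\<in>{Suc n..T}. c s \<omega>) = W \<omega>"
    using step.prems(2) by eventually_elim (simp add: sum_split_first[OF n(2)] algebra_simps)
  with step.IH Linf_add[OF S_n c_n]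
  have "(\<Sum>s\<in>{Suc n..T}. \<integral>\<omega>. u s (c s \<omega>) \<partial>M) \<le> opt_value (Suc n) W (\<lambda>\<omega>. S \<omega> + c n \<omega>)"
    by simp
  with bellman_inequality[OF W n S_n c_n] show ?case
    unfolding sum_split_first[OF n(2)] by linarith
qed

lemma opt_value_attained:
  assumes W: "Linf M (F T) W" and t: "1 \<le> t" "t \<le> T" and S: "Linf M (F (t - 1)) S"
  shows "\<exists>c. (\<forall>s\<in>{t..T}. Linf M (F s) (c s))
           \<and> (AE \<omega> in M. S \<omega> + (\<Sum>s\<in>{t..T}. c s \<omega>) = W \<omega>)
           \<and> (\<Sum>s\<in>{t..T}. \<integral>\<omega>. u s (c s \<omega>) \<partial>M) = opt_value t W S"
  using t(2) S
proof (induction t arbitrary: S rule: inc_induct)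
  case base
  have S_T: "Linf M (F T) S"
    using base.prems by (rule Linf_F_mono[rotated 2]) auto
  have rest: "Linf M (F T) (\<lambda>\<omega>. W \<omega> - S \<omega>)"
    using W S_T by (rule Linf_diff)
  have "(\<integral>\<omega>. u T (W \<omega> - S \<omega>) \<partial>M) = opt_value T W S"
    using W S_T rest by (rule opt_value_terminal) simp
  with rest show ?case
    by (intro exI[of _ "\<lambda>_ \<omega>. W \<omega> - S \<omega>"]) simp
next
  case (step n)
  have n: "1 \<le> n" "n < T"
    using step t by auto
  have S_n: "Linf M (F n) S"
    using step.prems n by (intro Linf_F_mono[of "n - 1" n]) auto
  define c_n where "c_n = opt_control n W S"
  have c_n: "Linf M (F n) c_n"
    unfolding c_n_def using W n S_n by (intro opt_control_Linf) auto
  obtain c where c: "\<forall>s\<in>{Suc n..T}. Linf M (F s) (c s)"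
    and budget: "AE \<omega> in M. (S \<omega> + c_n \<omega>) + (\<Sum>s\<in>{Suc n..T}. c s \<omega>) = W \<omega>"
    and value_eq: "(\<Sum>s\<in>{Suc n..T}. \<integral>\<omega>. u s (c s \<omega>) \<partial>M) = opt_value (Suc n) W (\<lambda>\<omega>. S \<omega> + c_n \<omega>)"
    using step.IH[of "\<lambda>\<omega>. S \<omega> + c_n \<omega>"] Linf_add[OF S_n c_n] by auto
  have tail_eq: "\<And>f. (\<Sum>s\<in>{Suc n..T}. f ((c(n := c_n)) s)) = (\<Sum>s\<in>{Suc n..T}. f (c s))"
    by (intro sum.cong) auto
  show ?case
  proof (intro exI[of _ "c(n := c_n)"] conjI)
    show "\<forall>s\<in>{n..T}. Linf M (F s) ((c(n := c_n)) s)"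
      using c c_n by (auto simp: Ball_def le_Suc_eq)
    show "AE \<omega> in M. S \<omega> + (\<Sum>s\<in>{n..T}. (c(n := c_n)) s \<omega>) = W \<omega>"
      using budget
      by eventually_elim (simp add: sum_split_first[OF n(2)] tail_eq[of "\<lambda>g. g _"] algebra_simps)
    show "(\<Sum>s\<in>{n..T}. \<integral>\<omega>. u s ((c(n := c_n)) s \<omega>) \<partial>M) = opt_value n W S"
      unfolding sum_split_first[OF n(2)] tail_eq[of "\<lambda>g. \<integral>\<omega>. u _ (g \<omega>) \<partial>M"]
      using bellman_equality[OF W n S_n] value_eq by (simp add: c_n_def)
  qed
qed

end

section \<open>Admissible consumption streams and the value U\<close>

locale exp_utility_market = exp_utility_model +
  fixes r :: "nat \<Rightarrow> 'a \<Rightarrow> real"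
  assumes r_predictable: "\<And>t. t \<in> {1..T} \<Longrightarrow> r t \<in> borel_measurable (F (t - 1))"
    and r_nonneg: "\<And>t \<omega>. t \<in> {1..T} \<Longrightarrow> \<omega> \<in> space M \<Longrightarrow> 0 \<le> r t \<omega>"
    and r_bounded: "\<exists>R. \<forall>t\<in>{1..T}. \<forall>\<omega>\<in>space M. r t \<omega> \<le> R"
begin

text \<open>The bank account B_t is F_t-measurable, at least 1, and bounded, so that discounting
  and compounding preserve bounded adapted processes.\<close>
lemma bank_measurable:
  assumes t: "t \<in> {1..T}"
  shows "bank r t \<in> borel_measurable (F t)"
proof -
  have "(\<lambda>\<omega>. 1 + r k \<omega>) \<in> borel_measurable (F t)" if "k \<in> {1..t}" for k
    using that t by (intro borel_measurable_add borel_measurable_const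
        measurable_F_mono[of "k - 1" t] r_predictable) auto
  then show ?thesis
    unfolding bank_def[abs_def] by (rule borel_measurable_prod)
qed

lemma bank_ge_1: "t \<le> T \<Longrightarrow> \<omega> \<in> space M \<Longrightarrow> 1 \<le> bank r t \<omega>"
  unfolding bank_def using r_nonneg by (intro prod_ge_1) auto

lemma bank_bounded:
  assumes "t \<le> T"
  shows "\<exists>B. \<forall>\<omega>\<in>space M. bank r t \<omega> \<le> B"
proof -
  obtain R where R: "\<forall>t\<in>{1..T}. \<forall>\<omega>\<in>space M. r t \<omega> \<le> R"
    using r_bounded by blast
  have "bank r t \<omega> \<le> (\<Prod>k\<in>{1..t}. 1 + R)" if "\<omega> \<in> space M" for \<omega>
    unfolding bank_def using assms that R r_nonneg by (intro prod_mono) auto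
  then show ?thesis
    by blast
qed

lemma discounted_Linf:
  assumes Y: "Y \<in> admissible M F T r W" and t: "t \<in> {1..T}"
  shows "Linf M (F t) (\<lambda>\<omega>. Y t \<omega> / bank r t \<omega>)"
proof -
  obtain D where Y_meas: "Y t \<in> borel_measurable (F t)" and D: "AE \<omega> in M. \<bar>Y t \<omega>\<bar> \<le> D"
    using Y t unfolding admissible_def Linf_def by blast
  have "AE \<omega> in M. \<bar>Y t \<omega> / bank r t \<omega>\<bar> \<le> D"
    using D AE_space
  proof eventually_elim
    case (elim \<omega>)
    then have "1 \<le> bank r t \<omega>"
      using bank_ge_1 t by auto
    then have "\<bar>Y t \<omega> / bank r t \<omega>\<bar> \<le> \<bar>Y t \<omega>\<bar>"
      by (simp add: divide_le_eq mult_le_cancel_left1)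
    then show ?case
      using elim(1) by linarith
  qed
  then show ?thesis
    using Y_meas bank_measurable[OF t] unfolding Linf_def by auto
qed

lemma compounded_admissible:
  assumes c: "\<And>t. t \<in> {1..T} \<Longrightarrow> Linf M (F t) (c t)"
    and budget: "AE \<omega> in M. (\<Sum>t\<in>{1..T}. c t \<omega>) = W \<omega>"
  shows "(\<lambda>t \<omega>. c t \<omega> * bank r t \<omega>) \<in> admissible M F T r W"
  unfolding admissible_def
proof (intro CollectI conjI ballI)
  fix t assume t: "t \<in> {1..T}"
  obtain D where c_meas: "c t \<in> borel_measurable (F t)" and D: "AE \<omega> in M. \<bar>c t \<omega>\<bar> \<le> D"
    using c[OF t] unfolding Linf_def by blast
  obtain B where B: "\<forall>\<omega>\<in>space M. bank r t \<omega> \<le> B"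
    using bank_bounded t by auto
  show meas: "(\<lambda>\<omega>. c t \<omega> * bank r t \<omega>) \<in> borel_measurable (F t)"
    using c_meas bank_measurable[OF t] by simp
  have "AE \<omega> in M. \<bar>c t \<omega> * bank r t \<omega>\<bar> \<le> D * B"
    using D AE_space
  proof eventually_elim
    case (elim \<omega>)
    then have "1 \<le> bank r t \<omega>" "bank r t \<omega> \<le> B"
      using bank_ge_1 B t by auto
    then show ?case
      using elim(1) by (simp add: abs_mult mult_mono)
  qed
  then show "Linf M (F T) (\<lambda>\<omega>. c t \<omega> * bank r t \<omega>)"
    using measurable_F_mono[OF _ _ meas, of T] t unfolding Linf_def by auto
next
  show "AE \<omega> in M. (\<Sum>t\<in>{1..T}. c t \<omega> * bank r t \<omega> / bank r t \<omega>) = W \<omega>"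
    using budget AE_space
  proof eventually_elim
    case (elim \<omega>)
    have "bank r t \<omega> \<noteq> 0" if "t \<in> {1..T}" for t
      using bank_ge_1[of t \<omega>] that elim(2) by auto
    then have "(\<Sum>t\<in>{1..T}. c t \<omega> * bank r t \<omega> / bank r t \<omega>) = (\<Sum>t\<in>{1..T}. c t \<omega>)"
      by (intro sum.cong) auto
    then show ?case
      using elim(1) by simp
  qed
qed

text \<open>No admissible stream for total wealth x + W beats opt_value 1 W (-x): after discounting,
  initial wealth x counts as already consumed amount -x.\<close>
lemma admissible_value_le:
  assumes W: "Linf M (F T) W" and Y: "Y \<in> admissible M F T r (\<lambda>\<omega>. x + W \<omega>)"
  shows "(\<Sum>t\<in>{1..T}. \<integral>\<omega>. u t (Y t \<omega> / bank r t \<omega>) \<partial>M) \<le> opt_value 1 W (\<lambda>_. - x)"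
proof -
  have "AE \<omega> in M. - x + (\<Sum>t\<in>{1..T}. Y t \<omega> / bank r t \<omega>) = W \<omega>"
    using Y unfolding admissible_def by (auto elim!: eventually_mono)
  then show ?thesis
    using T_ge_1 discounted_Linf[OF Y] by (intro opt_value_upper[OF W]) auto
qed

lemma admissible_value_attained:
  assumes W: "Linf M (F T) W"
  shows "\<exists>Y\<in>admissible M F T r (\<lambda>\<omega>. x + W \<omega>).
           (\<Sum>t\<in>{1..T}. \<integral>\<omega>. u t (Y t \<omega> / bank r t \<omega>) \<partial>M) = opt_value 1 W (\<lambda>_. - x)"
proof -
  obtain c where c: "\<forall>s\<in>{1..T}. Linf M (F s) (c s)"
    and budget: "AE \<omega> in M. - x + (\<Sum>s\<in>{1..T}. c s \<omega>) = W \<omega>"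
    and value_eq: "(\<Sum>s\<in>{1..T}. \<integral>\<omega>. u s (c s \<omega>) \<partial>M) = opt_value 1 W (\<lambda>_. - x)"
    using opt_value_attained[OF W order.refl T_ge_1, of "\<lambda>_. - x"] by auto
  have Y_adm: "(\<lambda>t \<omega>. c t \<omega> * bank r t \<omega>) \<in> admissible M F T r (\<lambda>\<omega>. x + W \<omega>)"
    using c budget by (intro compounded_admissible) (auto elim: eventually_mono)
  have "(\<Sum>t\<in>{1..T}. \<integral>\<omega>. u t (c t \<omega> * bank r t \<omega> / bank r t \<omega>) \<partial>M)
      = (\<Sum>t\<in>{1..T}. \<integral>\<omega>. u t (c t \<omega>) \<partial>M)"
  proof (intro sum.cong refl Bochner_Integration.integral_cong)
    fix t \<omega> assume "t \<in> {1..T}" "\<omega> \<in> space M"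
    then have "bank r t \<omega> \<noteq> 0"
      using bank_ge_1[of t \<omega>] by auto
    then show "u t (c t \<omega> * bank r t \<omega> / bank r t \<omega>) = u t (c t \<omega>)"
      by simp
  qed
  with Y_adm value_eq show ?thesis
    by (intro bexI[of _ "\<lambda>t \<omega>. c t \<omega> * bank r t \<omega>"]) auto
qed

lemma Uval_shift:
  assumes W: "Linf M (F T) W"
  shows "Uval M F T r u (\<lambda>\<omega>. x + W \<omega>) = (1 / \<beta> 1) * (1 - exp (- \<beta> 1 * x) * integral\<^sup>L M (L 1 W))"
proof -
  let ?A = "{(\<Sum>t\<in>{1..T}. \<integral>\<omega>. u t (Y t \<omega> / bank r t \<omega>) \<partial>M) | Y.
      Y \<in> admissible M F T r (\<lambda>\<omega>. x + W \<omega>)}"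
  have upper: "v \<le> opt_value 1 W (\<lambda>_. - x)" if "v \<in> ?A" for v
  proof -
    obtain Y where "v = (\<Sum>t\<in>{1..T}. \<integral>\<omega>. u t (Y t \<omega> / bank r t \<omega>) \<partial>M)"
      and "Y \<in> admissible M F T r (\<lambda>\<omega>. x + W \<omega>)"
      using \<open>v \<in> ?A\<close> by blast
    then show ?thesis
      using admissible_value_le[OF W] by simp
  qed
  obtain Y where Y: "Y \<in> admissible M F T r (\<lambda>\<omega>. x + W \<omega>)"
    and Y_value: "(\<Sum>t\<in>{1..T}. \<integral>\<omega>. u t (Y t \<omega> / bank r t \<omega>) \<partial>M) = opt_value 1 W (\<lambda>_. - x)"
    using admissible_value_attained[OF W, of x] by blast
  have attained: "opt_value 1 W (\<lambda>_. - x) \<in> ?A"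
    using Y Y_value[symmetric] by (intro CollectI exI[of _ Y] conjI)
  have "Uval M F T r u (\<lambda>\<omega>. x + W \<omega>) = Sup ?A"
    unfolding Uval_def ..
  also have "\<dots> = opt_value 1 W (\<lambda>_. - x)"
    by (rule cSup_eq_maximum[OF attained upper])
  also have "\<dots> = (1 / \<beta> 1) * (1 - exp (- \<beta> 1 * x) * integral\<^sup>L M (L 1 W))"
    unfolding opt_value_def by (simp add: mult.commute)
  finally show ?thesis .
qed

end

text \<open>Solving the indifference equation U(w + h - Z) = U(w) for the price h.\<close>
lemma indifference_equation:
  fixes b E w h :: real
  assumes b: "0 < b" and E: "0 < E"
  shows "(1 / b) * (1 - exp (- b * (w + h)) * E) = (1 / b) * (1 - exp (- b * w) * 1)
         \<longleftrightarrow> h = (1 / b) * ln E"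
proof -
  have "exp (- b * (w + h)) = exp (- b * w) / exp (b * h)"
    by (simp add: algebra_simps flip: exp_diff)
  then have "exp (- b * (w + h)) * E = exp (- b * w) * (E / exp (b * h))"
    by simp
  then have "(1 / b) * (1 - exp (- b * (w + h)) * E) = (1 / b) * (1 - exp (- b * w) * 1)
      \<longleftrightarrow> E = exp (b * h)"
    using b by (auto simp: field_simps)
  also have "\<dots> \<longleftrightarrow> ln E = b * h"
    using E by (auto simp: ln_exp exp_ln dest: sym)
  also have "\<dots> \<longleftrightarrow> h = (1 / b) * ln E"
    using b by (auto simp: field_simps)
  finally show ?thesis .
qed

theorem theorem3p4:
  fixes M :: "'a measure" and F :: "nat \<Rightarrow> 'a measure" and T :: nat
    and r :: "nat \<Rightarrow> 'a \<Rightarrow> real" and \<alpha> :: "nat \<Rightarrow> real"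
    and Z :: "'a \<Rightarrow> real" and x w :: real
  assumes "prob_space M"
    and "T \<ge> 1"
    and filt_sub: "\<forall>t\<le>T. subalgebra M (F t)"
    and filt_mono: "\<forall>s t. s \<le> t \<and> t \<le> T \<longrightarrow> sets (F s) \<subseteq> sets (F t)"
    and r_pred: "\<forall>t\<in>{1..T}. r t \<in> borel_measurable (F (t - 1))"
    and r_nonneg: "\<forall>t\<in>{1..T}. \<forall>\<omega>\<in>space M. 0 \<le> r t \<omega>"
    and r_bdd: "\<exists>C. \<forall>t\<in>{1..T}. \<forall>\<omega>\<in>space M. r t \<omega> \<le> C"
    and \<alpha>_pos: "\<forall>t\<in>{1..T}. 0 < \<alpha> t"
    and Z: "Linf M (F T) Z"
  shows "(Uval M F T r (exp_util \<alpha>) Z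
           = (1 / beta T \<alpha> 1) * (1 - integral\<^sup>L M (Lfun M F T \<alpha> 1 Z))) \<and>
         (Uval M F T r (exp_util \<alpha>) (\<lambda>\<omega>. x - Z \<omega>)
           = (1 / beta T \<alpha> 1) * (1 - exp (- beta T \<alpha> 1 * x)
                 * integral\<^sup>L M (Lfun M F T \<alpha> 1 (\<lambda>\<omega>. - Z \<omega>)))) \<and>
         (\<forall>h::real. Uval M F T r (exp_util \<alpha>) (\<lambda>\<omega>. w + h - Z \<omega>) = Uval M F T r (exp_util \<alpha>) (\<lambda>\<omega>. w)
           \<longleftrightarrow> h = (1 / beta T \<alpha> 1) * ln (integral\<^sup>L M (Lfun M F T \<alpha> 1 (\<lambda>\<omega>. - Z \<omega>))))"
proof -
  interpret exp_utility_market M F T \<alpha> r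
    by (intro exp_utility_market.intro exp_utility_model.intro exp_utility_model_axioms.intro
        exp_utility_market_axioms.intro) (use assms in auto)
  have neg_Z: "Linf M (F T) (\<lambda>\<omega>. - Z \<omega>)"
    using Linf_cmult[OF Z, of "- 1"] by simp
  have part_a: "Uval M F T r (exp_util \<alpha>) Z = (1 / beta T \<alpha> 1) * (1 - integral\<^sup>L M (Lfun M F T \<alpha> 1 Z))"
    using Uval_shift[OF Z, of 0] by simp
  have part_b: "Uval M F T r (exp_util \<alpha>) (\<lambda>\<omega>. y - Z \<omega>)
      = (1 / beta T \<alpha> 1) * (1 - exp (- beta T \<alpha> 1 * y) * integral\<^sup>L M (Lfun M F T \<alpha> 1 (\<lambda>\<omega>. - Z \<omega>)))"
    for y
    using Uval_shift[OF neg_Z, of y] by simp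
  have no_claim: "Uval M F T r (exp_util \<alpha>) (\<lambda>\<omega>. w) = (1 / beta T \<alpha> 1) * (1 - exp (- beta T \<alpha> 1 * w) * 1)"
    using Uval_shift[of "\<lambda>_. 0" w] integral_L_zero by simp
  have part_c: "Uval M F T r (exp_util \<alpha>) (\<lambda>\<omega>. w + h - Z \<omega>) = Uval M F T r (exp_util \<alpha>) (\<lambda>\<omega>. w)
      \<longleftrightarrow> h = (1 / beta T \<alpha> 1) * ln (integral\<^sup>L M (Lfun M F T \<alpha> 1 (\<lambda>\<omega>. - Z \<omega>)))" for h
    unfolding part_b no_claim using beta_pos[OF order.refl T_ge_1] integral_L_pos[OF neg_Z]
    by (rule indifference_equation)
  show ?thesis
    using part_a part_b part_c by blast
qed

end
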